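(* Let $K\ge 1$, $N\ge1$, and for $k\in\{0,1,\dots,K\}$ let $\bm{H}_k\colon\mathbb{R}^{d_k}\to\mathbb{R}^{N\times E_k}$ be differentiable maps, and let $\Phi\colon\mathbb{R}^{N\times E}\to\mathbb{R}$, $E=\sum_{k=0}^K E_k$, be differentiable. Put $\bm{x}=(\bm{x}_0,\dots,\bm{x}_K)$ and $f(\bm{x})=\Phi(\bm{H}_0(\bm{x}_0),\bm{H}_1(\bm{x}_1),\dots,\bm{H}_K(\bm{x}_K))$. Assume $\Phi$ is $L$-smooth, i.e. $\lVert\nabla\Phi(\bm{U})-\nabla\Phi(\bm{V})\rVert\le L\lVert\bm{U}-\bm{V}\rVert$ for all $\bm{U},\bm{V}$, and that each $\bm{H}_k$ has bounded derivative, i.e. $\lVert\nabla\bm{H}_k(\bm{x}_k)\rVert\le H$ for all $\bm{x}_k$ and all $k\in\{0,\dots,K\}$. Let $\{\bm{x}^t\}$ and $\{\bm{G}^t_k\}$ be the iterates and surrogates generated by the EF-VFL algorithm described in the context, and let $\bm{g}^t=(\bm{g}^t_0,\dots,\bm{g}^t_K)$ and $D^{(t)}$ be as defined there. Then for all $t\ge0$, $$\lVert \bm{g}^{t}-\nabla f(\bm{x}^{t})\rVert^2\le K H^2L^2 D^{(t)}.$$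
   Context: Norms of matrices are Frobenius norms, and the norm of the third-order tensor $\nabla\bm{H}_k(\bm{x}_k)$ is its Euclidean (Frobenius) norm; $\nabla_k$ denotes the partial derivative with respect to the $k$-th block of arguments. A contractive compressor is a (possibly random) map $\mathcal{C}$ with $\mathbb{E}\lVert\mathcal{C}(\bm{v})-\bm{v}\rVert^2\le(1-\alpha)\lVert\bm{v}\rVert^2$ for all $\bm{v}$, for some $\alpha\in(0,1]$, with independent randomness at each application. EF-VFL: surrogates are initialized $\bm{G}^0_k=\mathcal{C}(\bm{H}_k(\bm{x}^0_k))$, $k=0,\dots,K$; at each $t$, $\bm{x}^{t+1}=\bm{x}^t-\eta\tilde{\bm{g}}^t$ and $\bm{G}^{t+1}_k=\bm{G}^t_k+\mathcal{C}(\bm{H}_k(\bm{x}^{t+1}_k)-\bm{G}^t_k)$ for $k=0,\dots,K$. The full surrogate gradient has blocks $\bm{g}^t_k=\sum_{i=1}^N\sum_{j=1}^{E_k}[\tilde\nabla^t_k\Phi]_{ij}[\nabla\bm{H}_k(\bm{x}^t_k)]_{ij:}$ where $\tilde\nabla^t_k\Phi=\nabla_k\Phi(\bm{G}^t_0,\dots,\bm{G}^t_{k-1},\bm{H}_k(\bm{x}^t_k),\bm{G}^t_{k+1},\dots,\bm{G}^t_K)$; $\tilde{\bm{g}}^t$ is its mini-batch analogue computed from the same formula with $\Phi$ replaced by the mini-batch objective on a sampled batch $\mathcal{B}^t\subseteq[N]$ of size $B$ and only the corresponding rows of $\bm{H}_k,\bm{G}_k$. The total distortion is $D^{(t)}=\sum_{k=0}^K\lVert\bm{G}^t_k-\bm{H}_k(\bm{x}^t_k)\rVert^2$.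 *)

theory Defs
  imports "HOL-Analysis.Analysis"
begin

text \<open>All parameter coordinates live in one index type 'd, partitioned into
blocks by pb (block of coordinate j is pb j); matrix columns live in 'e, partitioned
into blocks by cb; rows are indexed by 'n (N = CARD('n)). A block map
H_k : R^{d_k} -> R^{N x E_k} is encoded as a map real^'d -> real^'e^'n depending only on
block-k coordinates and vanishing outside the block-k columns (zero padding).\<close>

definition mask :: "('e::finite \<Rightarrow> nat) \<Rightarrow> nat \<Rightarrow> real^'e^'n::finite \<Rightarrow> real^'e^'n" where
  "mask cb k A = (\<chi> i c. if cb c = k then A $ i $ c else 0)"

text \<open>Frobenius (Hilbert-Schmidt) norm of the Jacobian tensor of a linear map D,
i.e. the square root of the sum of squares of all partial derivatives.\<close>
definition hs_norm :: "(real^'d::finite \<Rightarrow> 'b::real_normed_vector) \<Rightarrow> real" where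
  "hs_norm D = sqrt (\<Sum>j\<in>UNIV. (norm (D (axis j 1)))\<^sup>2)"

text \<open>Surrogate gradient: block k of the result is
  sum over rows i in R and block-k columns c of
  [grad Phi (G_0,..,G_{k-1},H_k(x_k),G_{k+1},..,G_K)]_{ic} * [grad H_k(x_k)]_{ic:}.\<close>
definition sgrad ::
  "nat \<Rightarrow> ('d::finite \<Rightarrow> nat) \<Rightarrow> ('e::finite \<Rightarrow> nat)
   \<Rightarrow> (nat \<Rightarrow> real^'d \<Rightarrow> real^'e^'n::finite)
   \<Rightarrow> (nat \<Rightarrow> real^'d \<Rightarrow> real^'d \<Rightarrow> real^'e^'n)
   \<Rightarrow> (real^'e^'n \<Rightarrow> real^'e^'n) \<Rightarrow> 'n set \<Rightarrow> (nat \<Rightarrow> real^'e^'n) \<Rightarrow> real^'d \<Rightarrow> real^'d" where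
  "sgrad K pb cb H DH gP R G x =
     (\<chi> j. (let k = pb j;
                A = H k x + (\<Sum>l\<in>{0..K} - {k}. G l)
            in \<Sum>i\<in>R. \<Sum>c\<in>{c. cb c = k}. gP A $ i $ c * DH k x (axis j 1) $ i $ c))"

end

theory Submission
  imports Defs
begin

text \<open>
  Write \<open>U = \<Sum>\<^sub>l H\<^sub>l(x\<^sub>l)\<close> and let \<open>A\<^sub>k\<close> be \<open>U\<close> with every block \<open>l \<noteq> k\<close> replaced by the
  surrogate \<open>G\<^sub>l\<close>. Coordinate \<open>j\<close> of block \<open>k\<close> of the true gradient is
  \<open>\<langle>\<nabla>\<Phi>(U), \<partial>\<^sub>jH\<^sub>k\<rangle>\<close> (the other maps do not depend on \<open>x\<^sub>k\<close>), while the surrogate gradient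
  uses \<open>\<nabla>\<Phi>(A\<^sub>k)\<close>. By Cauchy-Schwarz and the Frobenius bound on \<open>\<nabla>H\<^sub>k\<close>, block \<open>k\<close> of the
  error is at most \<open>H\<^sup>2 \<parallel>\<nabla>\<Phi>(A\<^sub>k) - \<nabla>\<Phi>(U)\<parallel>\<^sup>2 \<le> H\<^sup>2 L\<^sup>2 \<parallel>A\<^sub>k - U\<parallel>\<^sup>2\<close>, and since the blocks occupy
  disjoint columns, \<open>\<parallel>A\<^sub>k - U\<parallel>\<^sup>2 = \<Sum>\<^sub>l\<^sub>\<noteq>\<^sub>k \<parallel>G\<^sub>l - H\<^sub>l(x\<^sub>l)\<parallel>\<^sup>2\<close>. Summing over \<open>k\<close> counts each
  block distortion \<open>K\<close> times.

  The bound holds at every point \<open>x\<close>: the algorithm enters only through the invariant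
  that the masked updates keep \<open>G\<^sub>k\<close> supported on the block-\<open>k\<close> columns.
\<close>

lemma GDERIV_unique:
  fixes f :: "'a::real_inner \<Rightarrow> real"
  assumes "GDERIV f x :> D" and "GDERIV f x :> D'"
  shows "D = D'"
proof -
  have "(\<lambda>h. h \<bullet> D) = (\<lambda>h. h \<bullet> D')"
    using assms unfolding gderiv_def by (rule has_derivative_unique)
  then have "(D - D') \<bullet> D = (D - D') \<bullet> D'"
    by metis
  then have "(D - D') \<bullet> (D - D') = 0"
    by (simp add: inner_diff_right)
  then show ?thesis by simp
qed

lemma has_derivative_imp_GDERIV:
  fixes f :: "real^'n::finite \<Rightarrow> real"
  assumes "(f has_derivative T) (at x)"
  shows "GDERIV f x :> (\<chi> j. T (axis j 1))"
proof -
  have "linear T" using assms has_derivative_linear by blast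
  have "T = (\<lambda>h. h \<bullet> (\<chi> j. T (axis j 1)))"
  proof
    fix h :: "real^'n"
    have "T h = T (\<Sum>j\<in>UNIV. h $ j *\<^sub>R axis j 1)"
      using basis_expansion[of h] by (simp add: scalar_mult_eq_scaleR)
    also have "\<dots> = (\<Sum>j\<in>UNIV. h $ j * T (axis j 1))"
      using \<open>linear T\<close> by (simp add: linear_sum linear_scale)
    finally show "T h = h \<bullet> (\<chi> j. T (axis j 1))" by (simp add: inner_vec_def)
  qed
  then show ?thesis using assms by (simp only: gderiv_def)
qed

lemma has_derivative_eq_0_if_constant_along:
  fixes F :: "'a::real_normed_vector \<Rightarrow> 'b::real_normed_vector"
  assumes const: "\<And>s. F (y + s *\<^sub>R v) = F y"
    and der: "(F has_derivative F') (at y)"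
  shows "F' v = 0"
proof -
  have line: "((\<lambda>s::real. y + s *\<^sub>R v) has_derivative (\<lambda>s. s *\<^sub>R v)) (at 0)"
    by (auto intro!: derivative_eq_intros)
  have "((\<lambda>s::real. F (y + s *\<^sub>R v)) has_derivative (\<lambda>s. F' (s *\<^sub>R v))) (at 0)"
    using has_derivative_compose[OF line] der by simp
  moreover have "((\<lambda>s::real. F (y + s *\<^sub>R v)) has_derivative (\<lambda>s. 0)) (at 0)"
    using const by simp
  ultimately have "(\<lambda>s. F' (s *\<^sub>R v)) = (\<lambda>s. 0)"
    by (rule has_derivative_unique)
  then show ?thesis by (metis scaleR_one)
qed

lemma has_derivative_vanishing_entry:
  fixes F :: "'a::real_normed_vector \<Rightarrow> real^'e::finite^'n::finite"
  assumes "\<And>y. F y $ i $ c = 0" and "(F has_derivative F') (at y)"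
  shows "F' h $ i $ c = 0"
proof -
  have "((\<lambda>y. F y $ i $ c) has_derivative (\<lambda>h. F' h $ i $ c)) (at y)"
    using bounded_linear.has_derivative[OF bounded_linear_vec_nth
        bounded_linear.has_derivative[OF bounded_linear_vec_nth assms(2)]] .
  moreover have "((\<lambda>y. F y $ i $ c) has_derivative (\<lambda>h. 0)) (at y)"
    using assms(1) by simp
  ultimately have "(\<lambda>h. F' h $ i $ c) = (\<lambda>h. 0)"
    by (rule has_derivative_unique)
  then show ?thesis by metis
qed

lemma norm_sum_column_blocks:
  fixes A :: "'k \<Rightarrow> real^'e::finite^'n::finite" and cb :: "'e \<Rightarrow> 'k"
  assumes "finite S" and "\<And>l i c. l \<in> S \<Longrightarrow> cb c \<noteq> l \<Longrightarrow> A l $ i $ c = 0"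
  shows "(norm (sum A S))\<^sup>2 = (\<Sum>l\<in>S. (norm (A l))\<^sup>2)"
proof (rule norm_sum_Pythagorean[OF assms(1)])
  show "pairwise (\<lambda>l m. orthogonal (A l) (A m)) S"
    unfolding pairwise_def orthogonal_def inner_vec_def inner_real_def
  proof (intro ballI impI sum.neutral)
    fix l m i c assume "l \<in> S" "m \<in> S" "l \<noteq> m"
    then show "A l $ i $ c * A m $ i $ c = 0"
      using assms(2) by (metis mult_zero_left mult_zero_right)
  qed
qed

lemma sum_sum_Diff_singleton:
  fixes f :: "'a \<Rightarrow> 'b::comm_ring_1"
  assumes "finite S"
  shows "(\<Sum>k\<in>S. \<Sum>l\<in>S - {k}. f l) = (of_nat (card S) - 1) * sum f S"
  using assms by (simp add: sum_diff1 sum_subtractf algebra_simps)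

lemma sum_power2_norm_axis_le_hs_norm:
  fixes D :: "real^'d::finite \<Rightarrow> 'b::real_normed_vector"
  shows "(\<Sum>j\<in>J. (norm (D (axis j 1)))\<^sup>2) \<le> (hs_norm D)\<^sup>2"
  unfolding hs_norm_def by (simp add: sum_nonneg sum_mono2)

lemma sum_power2_inner_blocks_le:
  fixes W :: "'k \<Rightarrow> 'a::real_inner" and V :: "'j \<Rightarrow> 'a" and blk :: "'j \<Rightarrow> 'k"
  assumes "finite J" and "finite I" and "\<And>j. j \<in> J \<Longrightarrow> blk j \<in> I"
    and B: "\<And>k. k \<in> I \<Longrightarrow> (\<Sum>j\<in>{j\<in>J. blk j = k}. (norm (V j))\<^sup>2) \<le> B"
  shows "(\<Sum>j\<in>J. (W (blk j) \<bullet> V j)\<^sup>2) \<le> B * (\<Sum>k\<in>I. (norm (W k))\<^sup>2)"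
proof -
  have "(\<Sum>j\<in>J. (W (blk j) \<bullet> V j)\<^sup>2) \<le> (\<Sum>j\<in>J. (norm (W (blk j)))\<^sup>2 * (norm (V j))\<^sup>2)"
    by (intro sum_mono) (simp add: power2_norm_eq_inner Cauchy_Schwarz_ineq)
  also have "\<dots> = (\<Sum>k\<in>I. (norm (W k))\<^sup>2 * (\<Sum>j\<in>{j\<in>J. blk j = k}. (norm (V j))\<^sup>2))"
    using assms(1-3) by (subst sum.group[symmetric, of J I blk]) (auto simp: sum_distrib_left)
  also have "\<dots> \<le> (\<Sum>k\<in>I. (norm (W k))\<^sup>2 * B)"
    using B by (intro sum_mono mult_left_mono) auto
  finally show ?thesis by (simp add: sum_distrib_left mult.commute)
qed

lemma sgrad_nth:
  assumes "\<And>h i c. cb c \<noteq> pb j \<Longrightarrow> DH (pb j) x h $ i $ c = 0"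
  shows "sgrad K pb cb H DH gP UNIV G x $ j
           = gP (H (pb j) x + (\<Sum>l\<in>{0..K} - {pb j}. G l)) \<bullet> DH (pb j) x (axis j 1)"
proof -
  define A where "A = H (pb j) x + (\<Sum>l\<in>{0..K} - {pb j}. G l)"
  define V where "V = DH (pb j) x (axis j 1)"
  have "sgrad K pb cb H DH gP UNIV G x $ j = (\<Sum>i\<in>UNIV. \<Sum>c\<in>{c. cb c = pb j}. gP A $ i $ c * V $ i $ c)"
    by (simp add: sgrad_def Let_def A_def V_def)
  also have "\<dots> = (\<Sum>i\<in>UNIV. \<Sum>c\<in>UNIV. gP A $ i $ c * V $ i $ c)"
    using assms by (intro sum.cong refl sum.mono_neutral_left) (auto simp: V_def)
  also have "\<dots> = gP A \<bullet> V"
    by (simp add: inner_vec_def)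
  finally show ?thesis by (simp add: A_def V_def)
qed

lemma GDERIV_compose_sum_blocks:
  fixes H :: "nat \<Rightarrow> real^'d::finite \<Rightarrow> real^'e::finite^'n::finite" and pb :: "'d \<Rightarrow> nat"
  assumes pb_range: "\<And>j. pb j \<le> K"
    and H_local: "\<And>k y z. k \<le> K \<Longrightarrow> (\<forall>j. pb j = k \<longrightarrow> y $ j = z $ j) \<Longrightarrow> H k y = H k z"
    and H_diff: "\<And>k. k \<le> K \<Longrightarrow> (H k has_derivative DH k x) (at x)"
    and Phi_grad: "GDERIV Phi (\<Sum>k\<le>K. H k x) :> g"
  shows "GDERIV (\<lambda>y. Phi (\<Sum>k\<le>K. H k y)) x :> (\<chi> j. DH (pb j) x (axis j 1) \<bullet> g)"
proof -
  have "((\<lambda>y. \<Sum>k\<le>K. H k y) has_derivative (\<lambda>h. \<Sum>k\<le>K. DH k x h)) (at x)"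
    using H_diff by (intro has_derivative_sum) auto
  then have "((\<lambda>y. Phi (\<Sum>k\<le>K. H k y)) has_derivative (\<lambda>h. (\<Sum>k\<le>K. DH k x h) \<bullet> g)) (at x)"
    using has_derivative_compose[of "\<lambda>y. \<Sum>k\<le>K. H k y" _ x UNIV Phi] Phi_grad
    by (simp add: gderiv_def)
  then have grad: "GDERIV (\<lambda>y. Phi (\<Sum>k\<le>K. H k y)) x :> (\<chi> j. (\<Sum>k\<le>K. DH k x (axis j 1)) \<bullet> g)"
    by (rule has_derivative_imp_GDERIV)
  have off_block: "DH k x (axis j 1) = 0" if "k \<le> K" "k \<noteq> pb j" for k j
  proof (rule has_derivative_eq_0_if_constant_along[OF _ H_diff[OF \<open>k \<le> K\<close>]])
    show "H k (x + s *\<^sub>R axis j 1) = H k x" for s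
      using that by (intro H_local) (auto simp: axis_def)
  qed
  have "(\<Sum>k\<le>K. DH k x (axis j 1)) = DH (pb j) x (axis j 1)" for j
    using pb_range off_block by (subst sum.remove[of _ "pb j"]) (auto intro: sum.neutral)
  then show ?thesis using grad by simp
qed

lemma sgrad_error_le:
  fixes H :: "nat \<Rightarrow> real^'d::finite \<Rightarrow> real^'e::finite^'n::finite"
    and G :: "nat \<Rightarrow> real^'e^'n" and pb :: "'d \<Rightarrow> nat" and cb :: "'e \<Rightarrow> nat"
  assumes pb_range: "\<And>j. pb j \<le> K"
    and H_cols: "\<And>k i c. k \<le> K \<Longrightarrow> cb c \<noteq> k \<Longrightarrow> H k x $ i $ c = 0"
    and G_cols: "\<And>k i c. k \<le> K \<Longrightarrow> cb c \<noteq> k \<Longrightarrow> G k $ i $ c = 0"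
    and DH_cols: "\<And>k h i c. k \<le> K \<Longrightarrow> cb c \<noteq> k \<Longrightarrow> DH k x h $ i $ c = 0"
    and DH_bound: "\<And>k. k \<le> K \<Longrightarrow> hs_norm (DH k x) \<le> Hb"
    and smooth: "\<And>U V. norm (gPhi U - gPhi V) \<le> L * norm (U - V)"
  shows "(norm (sgrad K pb cb H DH gPhi UNIV G x
                 - (\<chi> j. DH (pb j) x (axis j 1) \<bullet> gPhi (\<Sum>k\<le>K. H k x))))\<^sup>2
           \<le> real K * Hb\<^sup>2 * L\<^sup>2 * (\<Sum>k\<le>K. (norm (G k - H k x))\<^sup>2)"
proof -
  define U where "U = (\<Sum>k\<le>K. H k x)"
  define A where "A k = H k x + (\<Sum>l\<in>{0..K} - {k}. G l)" for k
  define W where "W k = gPhi (A k) - gPhi U" for k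
  define V where "V j = DH (pb j) x (axis j 1)" for j
  define d where "d l = (norm (G l - H l x))\<^sup>2" for l
  have err_nth: "(sgrad K pb cb H DH gPhi UNIV G x - (\<chi> j. V j \<bullet> gPhi U)) $ j = W (pb j) \<bullet> V j" for j
    using sgrad_nth[of cb pb j DH x] DH_cols pb_range
    by (simp add: W_def A_def V_def inner_diff_left inner_commute[of "DH (pb j) x (axis j 1)"])
  have V_block: "(\<Sum>j\<in>{j\<in>UNIV. pb j = k}. (norm (V j))\<^sup>2) \<le> Hb\<^sup>2" if "k \<le> K" for k
  proof -
    have "(\<Sum>j\<in>{j\<in>UNIV. pb j = k}. (norm (V j))\<^sup>2) = (\<Sum>j\<in>{j. pb j = k}. (norm (DH k x (axis j 1)))\<^sup>2)"
      by (intro sum.cong) (auto simp: V_def)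
    also have "\<dots> \<le> (hs_norm (DH k x))\<^sup>2"
      by (rule sum_power2_norm_axis_le_hs_norm)
    also have "\<dots> \<le> Hb\<^sup>2"
      using DH_bound[OF that] by (intro power_mono) (auto simp: hs_norm_def sum_nonneg)
    finally show ?thesis .
  qed
  have W_le: "(norm (W k))\<^sup>2 \<le> L\<^sup>2 * (\<Sum>l\<in>{..K} - {k}. d l)" if "k \<le> K" for k
  proof -
    have "U = H k x + (\<Sum>l\<in>{..K} - {k}. H l x)"
      unfolding U_def using sum.remove[of "{..K}" k] that by auto
    then have "A k - U = (\<Sum>l\<in>{..K} - {k}. G l - H l x)"
      by (simp add: A_def atLeast0AtMost sum_subtractf)
    then have A_U: "(norm (A k - U))\<^sup>2 = (\<Sum>l\<in>{..K} - {k}. d l)"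
      unfolding d_def by (auto intro: norm_sum_column_blocks[where cb = cb] simp: G_cols H_cols)
    have "(norm (W k))\<^sup>2 \<le> (L * norm (A k - U))\<^sup>2"
      unfolding W_def by (rule power_mono[OF smooth norm_ge_zero])
    also have "\<dots> = L\<^sup>2 * (\<Sum>l\<in>{..K} - {k}. d l)"
      by (simp add: power_mult_distrib A_U)
    finally show ?thesis .
  qed
  have "(norm (sgrad K pb cb H DH gPhi UNIV G x - (\<chi> j. V j \<bullet> gPhi U)))\<^sup>2
          = (\<Sum>j\<in>UNIV. ((sgrad K pb cb H DH gPhi UNIV G x - (\<chi> j. V j \<bullet> gPhi U)) $ j)\<^sup>2)"
    by (simp add: norm_vec_def L2_set_def sum_nonneg)
  also have "\<dots> = (\<Sum>j\<in>UNIV. (W (pb j) \<bullet> V j)\<^sup>2)"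
    by (simp only: err_nth)
  also have "\<dots> \<le> Hb\<^sup>2 * (\<Sum>k\<le>K. (norm (W k))\<^sup>2)"
    using pb_range V_block by (intro sum_power2_inner_blocks_le) auto
  also have "\<dots> \<le> Hb\<^sup>2 * (\<Sum>k\<le>K. L\<^sup>2 * (\<Sum>l\<in>{..K} - {k}. d l))"
    using W_le by (intro mult_left_mono sum_mono) auto
  also have "\<dots> = real K * Hb\<^sup>2 * L\<^sup>2 * (\<Sum>k\<le>K. d k)"
    by (simp add: sum_distrib_left[symmetric] sum_sum_Diff_singleton)
  finally show ?thesis by (simp add: U_def V_def d_def)
qed

theorem lemma1:
  fixes K :: nat
    and pb :: "'d::finite \<Rightarrow> nat"
    and cb :: "'e::finite \<Rightarrow> nat"
    and H :: "nat \<Rightarrow> real^'d \<Rightarrow> real^'e^'n::finite"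
    and DH :: "nat \<Rightarrow> real^'d \<Rightarrow> real^'d \<Rightarrow> real^'e^'n"
    and Phi :: "real^'e^'n \<Rightarrow> real"
    and gPhi :: "real^'e^'n \<Rightarrow> real^'e^'n"
    and PhiB :: "'n set \<Rightarrow> real^'e^'n \<Rightarrow> real"
    and gPhiB :: "'n set \<Rightarrow> real^'e^'n \<Rightarrow> real^'e^'n"
    and Bs :: "nat \<Rightarrow> 'n set"
    and Bsz :: nat
    and Cr :: "nat \<Rightarrow> nat \<Rightarrow> real^'e^'n \<Rightarrow> real^'e^'n"
    and eta L Hb :: real
    and x :: "nat \<Rightarrow> real^'d"
    and G :: "nat \<Rightarrow> nat \<Rightarrow> real^'e^'n"
    and t :: nat
  assumes K_ge: "K \<ge> 1"
    and pb_range: "\<forall>j. pb j \<le> K"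
    and cb_range: "\<forall>c. cb c \<le> K"
    and H_local: "\<forall>k\<le>K. \<forall>y z. (\<forall>j. pb j = k \<longrightarrow> y $ j = z $ j) \<longrightarrow> H k y = H k z"
    and H_cols: "\<forall>k\<le>K. \<forall>y i c. cb c \<noteq> k \<longrightarrow> H k y $ i $ c = 0"
    and H_diff: "\<forall>k\<le>K. \<forall>y. (H k has_derivative DH k y) (at y)"
    and H_bound: "\<forall>k\<le>K. \<forall>y. hs_norm (DH k y) \<le> Hb"
    and Phi_grad: "\<forall>U. GDERIV Phi U :> gPhi U"
    and Phi_smooth: "\<forall>U V. norm (gPhi U - gPhi V) \<le> L * norm (U - V)"
    and PhiB_rows: "\<forall>S U V. (\<forall>i\<in>S. U $ i = V $ i) \<longrightarrow> PhiB S U = PhiB S V"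
    and PhiB_grad: "\<forall>S U. GDERIV (PhiB S) U :> gPhiB S U"
    and batch: "\<forall>s. card (Bs s) = Bsz"
    and G_init: "\<forall>k\<le>K. G 0 k = mask cb k (Cr 0 k (H k (x 0)))"
    and x_step: "\<forall>s. x (Suc s) = x s - eta *\<^sub>R sgrad K pb cb H DH (gPhiB (Bs s)) (Bs s) (G s) (x s)"
    and G_step: "\<forall>s. \<forall>k\<le>K. G (Suc s) k = G s k + mask cb k (Cr (Suc s) k (H k (x (Suc s)) - G s k))"
  shows "(\<exists>D. GDERIV (\<lambda>y. Phi (\<Sum>k\<le>K. H k y)) (x t) :> D) \<and>
         (\<forall>D. GDERIV (\<lambda>y. Phi (\<Sum>k\<le>K. H k y)) (x t) :> D \<longrightarrow>
            (norm (sgrad K pb cb H DH gPhi UNIV (G t) (x t) - D))\<^sup>2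
              \<le> real K * Hb\<^sup>2 * L\<^sup>2 * (\<Sum>k\<le>K. (norm (G t k - H k (x t)))\<^sup>2))"
proof -
  have G_cols: "\<forall>k\<le>K. \<forall>i c. cb c \<noteq> k \<longrightarrow> G s k $ i $ c = 0" for s
    by (induction s) (use G_init G_step in \<open>auto simp: mask_def\<close>)
  have DH_cols: "DH k y h $ i $ c = 0" if "k \<le> K" "cb c \<noteq> k" for k y h i c
    using has_derivative_vanishing_entry[of "H k" i c] H_cols H_diff that by blast
  have grad: "GDERIV (\<lambda>y. Phi (\<Sum>k\<le>K. H k y)) (x t)
                :> (\<chi> j. DH (pb j) (x t) (axis j 1) \<bullet> gPhi (\<Sum>k\<le>K. H k (x t)))"
    using pb_range H_local H_diff Phi_grad by (intro GDERIV_compose_sum_blocks) auto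
  have "(norm (sgrad K pb cb H DH gPhi UNIV (G t) (x t)
                - (\<chi> j. DH (pb j) (x t) (axis j 1) \<bullet> gPhi (\<Sum>k\<le>K. H k (x t)))))\<^sup>2
          \<le> real K * Hb\<^sup>2 * L\<^sup>2 * (\<Sum>k\<le>K. (norm (G t k - H k (x t)))\<^sup>2)"
    using pb_range H_cols G_cols DH_cols H_bound Phi_smooth by (intro sgrad_error_le) auto
  with grad show ?thesis
    using GDERIV_unique by blast
qed

end
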